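(* Let $\overleftarrow\sigma=(\sigma_n:\mathcal A_{n+1}^*\to\mathcal A_n^* )_{n\ge0}$ be an everywhere growing directive sequence and $\overleftarrow v=(\vec v_n)_{n\ge0}$ a vector tower over $\overleftarrow\sigma$. For each $k\ge0$ let $\mu_k=\mathfrak m_k(\overleftarrow v\dagger_k)\in\mathcal M(X_k)$. Then $\sigma_k^{\mathcal M}(\mu_{k+1})=\mu_k$ for all $k\ge0$, i.e. $(\mu_k)_{k\ge0}$ is a measure tower on $\overleftarrow\sigma$.
   Context: Directive sequence: non-erasing monoid morphisms $\sigma_n:\mathcal A_{n+1}^*\to\mathcal A_n^*$ over finite alphabets; $\sigma_{[n,m)}=\sigma_n\circ\cdots\circ\sigma_{m-1}$; everywhere growing means $\min_{a\in\mathcal A_n}|\sigma_{[0,n)}(a)|\to\infty$. The truncated sequence $\overleftarrow\sigma\dagger_k=(\sigma_n)_{n\ge k}$; the level subshift $X_k\subseteq\mathcal A_k^{\mathbb Z}$ is the subshift generated by $\overleftarrow\sigma\dagger_k$, i.e. all $\mathbf x$ whose finite factors are factors of some $\sigma_{[k,n)}(a)$, $n>k$, $a\in\mathcal A_n$. $M(\sigma)=(|\sigma(a)|_b)_{b,a}$ is the incidence matrix. A vector tower is $(\vec v_n)$, $\vec v_n\in\mathbb R_{\ge0}^{\mathcal A_n}$, with $\vec v_n=M(\sigma_n)\vec v_{n+1}$; its truncation is $\overleftarrow v\dagger_k=(\vec v_n)_{n\ge k}$, a vector tower over $\overleftarrow\sigma\dagger_k$. The evaluation $\mathfrak m_k(\overleftarrow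 v\dagger_k)$ is the invariant measure $\mu$ on $X_k$ with $\mu([w])=\lim_{n\to\infty}\sum_{a\in\mathcal A_n}\vec v_n(a)|\sigma_{[k,n)}(a)|_w$ for $w\in\mathcal A_k^*$ ($|u|_w$ = number of possibly overlapping occurrences; $[w]=\{\mathbf x:\mathbf x_{[1,|w|]}=w\}$). $\mathcal M(Y)$ = finite shift-invariant Borel measures supported in $Y$. A measure tower on $\overleftarrow\sigma$ is a sequence $\mu_n\in\mathcal M(\mathcal A_n^{\mathbb Z})$ with $\mu_n=\sigma_n^{\mathcal M}(\mu_{n+1})$ for all $n$. Measure transfer for non-erasing $\sigma:\mathcal A^*\to\mathcal B^*$: with $\mathcal A_\sigma=\{a(k):1\le k\le|\sigma(a)|\}$, $\pi_\sigma(a)=a(1)\cdots a(|\sigma(a)|)$, $\alpha_\sigma(a(k))=$ $k$-th letter of $\sigma(a)$, and $\widehat w$ the shortest word in $\mathcal A^*$ whose $\pi_\sigma$-image contains $w\in\mathcal A_\sigma^*$ (with $\mu([\widehat w]):=0$ if none), $\sigma^{\mathcal M}(\mu)([w'])=\sum_{\alpha_\sigma(w)=w'}\mu([\widehat w])$. *)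

theory Defs
  imports Complex_Main
begin

text \<open>Words are lists. A directive sequence is given by alphabets A n (sets of letters
  of a common type) and letter images sig n :: 'a \<Rightarrow> 'a list, sig n a \<in> (A n)^* for a \<in> A (n+1).\<close>

definition subst :: "('a \<Rightarrow> 'a list) \<Rightarrow> 'a list \<Rightarrow> 'a list" where
  "subst s w = concat (map s w)"

text \<open>sig_range sig k m = sigma_[k,k+m) = sigma_k o ... o sigma_(k+m-1).\<close>
fun sig_range :: "(nat \<Rightarrow> 'a \<Rightarrow> 'a list) \<Rightarrow> nat \<Rightarrow> nat \<Rightarrow> 'a list \<Rightarrow> 'a list" where
  "sig_range sig k 0 w = w"
| "sig_range sig k (Suc m) w = subst (sig k) (sig_range sig (Suc k) m w)"

definition directive_seq :: "(nat \<Rightarrow> 'a set) \<Rightarrow> (nat \<Rightarrow> 'a \<Rightarrow> 'a list) \<Rightarrow> bool" where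
  "directive_seq A sig \<longleftrightarrow> (\<forall>n. finite (A n) \<and> A n \<noteq> {} \<and>
      (\<forall>a \<in> A (Suc n). sig n a \<noteq> [] \<and> set (sig n a) \<subseteq> A n))"

definition everywhere_growing :: "(nat \<Rightarrow> 'a set) \<Rightarrow> (nat \<Rightarrow> 'a \<Rightarrow> 'a list) \<Rightarrow> bool" where
  "everywhere_growing A sig \<longleftrightarrow>
     filterlim (\<lambda>n. Min ((\<lambda>a. length (sig_range sig 0 n [a])) ` A n)) at_top sequentially"

definition occ :: "'a list \<Rightarrow> 'a list \<Rightarrow> nat" where
  "occ u w = card {i. i + length w \<le> length u \<and> take (length w) (drop i u) = w}"

definition vector_tower :: "(nat \<Rightarrow> 'a set) \<Rightarrow> (nat \<Rightarrow> 'a \<Rightarrow> 'a list) \<Rightarrow> (nat \<Rightarrow> 'a \<Rightarrow> real) \<Rightarrow> bool" where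
  "vector_tower A sig v \<longleftrightarrow> (\<forall>n. (\<forall>b \<in> A n. v n b \<ge> 0) \<and>
      (\<forall>b \<in> A n. v n b = (\<Sum>a \<in> A (Suc n). real (count_list (sig n a) b) * v (Suc n) a)))"

text \<open>A shift-invariant measure on A^Z is represented by its values on cylinders [w], w nonempty.
  Evaluation m_k of the truncated tower: mu([w]) = lim_n sum_a v_n(a) |sigma_[k,n)(a)|_w.\<close>
definition eval_tower :: "(nat \<Rightarrow> 'a set) \<Rightarrow> (nat \<Rightarrow> 'a \<Rightarrow> 'a list) \<Rightarrow> (nat \<Rightarrow> 'a \<Rightarrow> real)
    \<Rightarrow> nat \<Rightarrow> 'a list \<Rightarrow> real" where
  "eval_tower A sig v k w =
     lim (\<lambda>m. \<Sum>a \<in> A (k + m). v (k + m) a * real (occ (sig_range sig k m [a]) w))"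

text \<open>Measure transfer. Letters of A_sigma are pairs (a,i), 1 \<le> i \<le> |sigma(a)|.\<close>
definition sub_alph :: "'a set \<Rightarrow> ('a \<Rightarrow> 'b list) \<Rightarrow> ('a \<times> nat) set" where
  "sub_alph A s = {(a, i). a \<in> A \<and> 1 \<le> i \<and> i \<le> length (s a)}"

definition pi_sig :: "('a \<Rightarrow> 'b list) \<Rightarrow> 'a list \<Rightarrow> ('a \<times> nat) list" where
  "pi_sig s u = concat (map (\<lambda>a. map (\<lambda>i. (a, i)) [1..<Suc (length (s a))]) u)"

definition alpha_sig :: "('a \<Rightarrow> 'b list) \<Rightarrow> 'a \<times> nat \<Rightarrow> 'b" where
  "alpha_sig s p = s (fst p) ! (snd p - 1)"

definition is_factor :: "'c list \<Rightarrow> 'c list \<Rightarrow> bool" where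
  "is_factor w u \<longleftrightarrow> (\<exists>p q. u = p @ w @ q)"

definition hat :: "'a set \<Rightarrow> ('a \<Rightarrow> 'b list) \<Rightarrow> ('a \<times> nat) list \<Rightarrow> 'a list" where
  "hat A s w = (THE u. u \<in> lists A \<and> is_factor w (pi_sig s u) \<and>
      (\<forall>u' \<in> lists A. is_factor w (pi_sig s u') \<longrightarrow> length u \<le> length u'))"

definition hat_val :: "'a set \<Rightarrow> ('a \<Rightarrow> 'b list) \<Rightarrow> ('a list \<Rightarrow> real) \<Rightarrow> ('a \<times> nat) list \<Rightarrow> real" where
  "hat_val A s mu w = (if \<exists>u \<in> lists A. is_factor w (pi_sig s u) then mu (hat A s w) else 0)"

definition measure_transfer :: "'a set \<Rightarrow> ('a \<Rightarrow> 'b list) \<Rightarrow> ('a list \<Rightarrow> real) \<Rightarrow> 'b list \<Rightarrow> real" where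
  "measure_transfer A s mu w' =
     (\<Sum>w \<in> {w. w \<in> lists (sub_alph A s) \<and> map (alpha_sig s) w = w'}. hat_val A s mu w)"

end

theory Submission
  imports Defs "HOL-Library.Sublist"
begin

text \<open>Every letter of \<open>\<sigma>\<^sub>k(u)\<close> is read off a letter \<open>(a, i)\<close> of \<open>\<pi>(u)\<close>, so the
  occurrences of \<open>w'\<close> in \<open>\<sigma>\<^sub>k(u)\<close> split according to their lifts \<open>w\<close> with
  \<open>\<alpha>(w) = w'\<close>. Minimality forces \<open>w\<close> to start in the first and end in the last block of
  \<open>\<pi>(hat w)\<close>, and since block letters record their position, the occurrences of \<open>w\<close> in
  \<open>\<pi>(u)\<close> correspond exactly to the occurrences of \<open>hat w\<close> in \<open>u\<close>. Applying this to
  \<open>u = \<sigma>[k+1, k+1+m)(a)\<close> and summing against \<open>v\<close> shows that the transfer of the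
  \<open>m\<close>-th approximant of \<open>\<mu>\<^sub>k\<^sub>+\<^sub>1\<close> is the \<open>(m+1)\<close>-th approximant of \<open>\<mu>\<^sub>k\<close>; the transfer is a
  finite sum, so it commutes with the limit. The approximants converge because they are
  nondecreasing (occurrences in the pieces of a concatenation are occurrences in the whole) and
  bounded by the total mass of \<open>v\<^sub>k\<close>.\<close>

definition occ_pos :: "'c list \<Rightarrow> 'c list \<Rightarrow> nat set" where
  "occ_pos u w = {i. i + length w \<le> length u \<and> take (length w) (drop i u) = w}"

lemma occ_eq_card_occ_pos: "occ u w = card (occ_pos u w)"
  by (simp add: occ_def occ_pos_def)

lemma finite_occ_pos [simp]: "finite (occ_pos u w)"
  unfolding occ_pos_def by (rule finite_subset[of _ "{..length u}"]) auto

lemma occ_Nil: "w \<noteq> [] \<Longrightarrow> occ [] w = 0"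
  by (simp add: occ_def)

lemma occ_pos_subset_lessThan: "w \<noteq> [] \<Longrightarrow> occ_pos u w \<subseteq> {..<length u}"
  unfolding occ_pos_def by (cases w) auto

lemma occ_pos_mono_append: "occ_pos u w \<subseteq> occ_pos (u @ v) w"
  by (auto simp: occ_pos_def)

lemma occ_le_length: "w \<noteq> [] \<Longrightarrow> occ u w \<le> length u"
  unfolding occ_eq_card_occ_pos
  by (metis occ_pos_subset_lessThan card_lessThan card_mono finite_lessThan)

lemma occ_gt_0_iff_is_factor: "0 < occ u w \<longleftrightarrow> is_factor w u"
proof
  assume "0 < occ u w"
  then obtain i where "take (length w) (drop i u) = w"
    unfolding occ_eq_card_occ_pos card_gt_0_iff by (auto simp: occ_pos_def)
  moreover have "u = take i u @ take (length w) (drop i u) @ drop (length w) (drop i u)"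
    by (simp only: append_take_drop_id)
  ultimately show "is_factor w u"
    unfolding is_factor_def by (metis (no_types))
next
  assume "is_factor w u"
  then obtain p q where "u = p @ w @ q"
    unfolding is_factor_def by blast
  then have "length p \<in> occ_pos u w"
    by (simp add: occ_pos_def)
  then show "0 < occ u w"
    unfolding occ_eq_card_occ_pos by (metis card_gt_0_iff empty_iff finite_occ_pos)
qed

lemma occ_append:
  "occ (p @ q) w = card {i \<in> occ_pos (p @ q) w. i < length p} + occ q w"
proof -
  let ?P = "occ_pos (p @ q) w"
  have shift: "{i \<in> ?P. \<not> i < length p} = (\<lambda>i. i + length p) ` occ_pos q w"
  proof (rule set_eqI, rule iffI)
    fix i assume "i \<in> {i \<in> ?P. \<not> i < length p}"
    then show "i \<in> (\<lambda>i. i + length p) ` occ_pos q w"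
      by (intro image_eqI[of _ _ "i - length p"]) (auto simp: occ_pos_def)
  qed (auto simp: occ_pos_def)
  have "occ (p @ q) w = card ({i \<in> ?P. i < length p} \<union> {i \<in> ?P. \<not> i < length p})"
    unfolding occ_eq_card_occ_pos by (rule arg_cong[where f = card]) auto
  also have "\<dots> = card {i \<in> ?P. i < length p} + card {i \<in> ?P. \<not> i < length p}"
    by (rule card_Un_disjoint) auto
  also have "card {i \<in> ?P. \<not> i < length p} = occ q w"
    unfolding shift occ_eq_card_occ_pos by (rule card_image) (simp add: inj_on_def)
  finally show ?thesis .
qed

lemma prefix_iff_take_eq: "prefix h x \<longleftrightarrow> length h \<le> length x \<and> take (length h) x = h"
  by (metis append_eq_conv_conj append_take_drop_id le_add1 length_append prefix_def)

lemma occ_Cons: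
  assumes "h \<noteq> []"
  shows "occ (a # u) h = (if prefix h (a # u) then 1 else 0) + occ u h"
proof -
  have "{i \<in> occ_pos ([a] @ u) h. i < length [a]} = (if prefix h (a # u) then {0} else {})"
    by (auto simp: occ_pos_def prefix_iff_take_eq)
  then show ?thesis
    using occ_append[of "[a]" u h] by simp
qed

lemma sum_list_occ_le_occ_concat:
  assumes "w \<noteq> []"
  shows "(\<Sum>u\<leftarrow>us. occ u w) \<le> occ (concat us) w"
proof (induction us)
  case Nil
  show ?case by (simp add: occ_Nil[OF assms])
next
  case (Cons u us)
  have "occ_pos u w \<subseteq> {i \<in> occ_pos (u @ concat us) w. i < length u}"
    using occ_pos_subset_lessThan[OF assms] occ_pos_mono_append by blast
  then have "occ u w \<le> card {i \<in> occ_pos (u @ concat us) w. i < length u}"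
    unfolding occ_eq_card_occ_pos by (rule card_mono[rotated]) simp
  then show ?case
    using Cons.IH by (simp add: occ_append)
qed

lemma occ_map_eq_sum:
  assumes "set p \<subseteq> B" "finite B"
  shows "occ (map f p) w' = (\<Sum>w \<in> {w \<in> lists B. map f w = w'}. occ p w)"
proof -
  let ?W = "{w \<in> lists B. map f w = w'}"
  have "?W \<subseteq> {w. set w \<subseteq> B \<and> length w = length w'}"
    by auto
  then have finite_W: "finite ?W"
    using finite_lists_length_eq[OF assms(2)] finite_subset by blast
  have "occ_pos (map f p) w' = (\<Union>w\<in>?W. occ_pos p w)"
  proof (rule set_eqI, rule iffI)
    fix i assume i: "i \<in> occ_pos (map f p) w'"
    let ?w = "take (length w') (drop i p)"
    have "set ?w \<subseteq> B"
      using assms(1) by (meson in_set_dropD in_set_takeD subset_iff)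
    moreover have "map f ?w = w'"
      using i by (simp add: occ_pos_def take_map drop_map)
    moreover have "i \<in> occ_pos p ?w"
      using i by (auto simp: occ_pos_def min_def)
    ultimately show "i \<in> (\<Union>w\<in>?W. occ_pos p w)"
      by blast
  next
    fix i assume "i \<in> (\<Union>w\<in>?W. occ_pos p w)"
    then obtain w where "w \<in> ?W" "i \<in> occ_pos p w"
      by blast
    then show "i \<in> occ_pos (map f p) w'"
      by (auto simp: occ_pos_def take_map drop_map)
  qed
  moreover have "occ_pos p w1 \<inter> occ_pos p w2 = {}"
    if "w1 \<in> ?W" "w2 \<in> ?W" "w1 \<noteq> w2" for w1 w2
  proof -
    have "length w1 = length w2"
      using that by (metis (mono_tags, lifting) length_map mem_Collect_eq)
    then show ?thesis
      using that(3) by (auto simp: occ_pos_def)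
  qed
  ultimately show ?thesis
    unfolding occ_eq_card_occ_pos by (simp add: card_UN_disjoint[OF finite_W])
qed

lemma subst_Nil [simp]: "subst s [] = []"
  by (simp add: subst_def)

lemma subst_Cons [simp]: "subst s (a # w) = s a @ subst s w"
  by (simp add: subst_def)

lemma subst_append [simp]: "subst s (u @ w) = subst s u @ subst s w"
  by (simp add: subst_def)

lemma subst_concat: "subst s (concat xs) = concat (map (subst s) xs)"
  by (induction xs) auto

lemma set_subst: "set (subst s w) = (\<Union>a \<in> set w. set (s a))"
  by (induction w) auto

lemma sig_range_eq_concat: "sig_range sig k m w = concat (map (\<lambda>b. sig_range sig k m [b]) w)"
proof (induction m arbitrary: k w)
  case 0
  show ?case by (induction w) auto
next
  case (Suc m)
  show ?case
    by (simp only: sig_range.simps, subst Suc[of "Suc k"]) (simp add: subst_concat comp_def)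
qed

lemma sig_range_Suc_right: "sig_range sig k (Suc m) w = sig_range sig k m (subst (sig (k + m)) w)"
  by (induction m arbitrary: k) simp_all

lemma sig_range_Suc_letter:
  "sig_range sig k (Suc m) [a] = concat (map (\<lambda>b. sig_range sig k m [b]) (sig (k + m) a))"
  by (simp only: sig_range_Suc_right) (simp add: sig_range_eq_concat[of sig k m "sig (k + m) a"])

lemma set_sig_range_subset:
  assumes "directive_seq A sig" "set w \<subseteq> A (k + m)"
  shows "set (sig_range sig k m w) \<subseteq> A k"
  using assms(2)
proof (induction m arbitrary: k)
  case (Suc m)
  then have "set (sig_range sig (Suc k) m w) \<subseteq> A (Suc k)"
    by simp
  then show ?case
    using assms(1) by (auto simp: directive_seq_def set_subst)
qed simp

lemma vector_tower_sum_step: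
  assumes "directive_seq A sig" "vector_tower A sig v"
  shows "(\<Sum>a \<in> A (Suc n). v (Suc n) a * real (\<Sum>b\<leftarrow>sig n a. g b)) = (\<Sum>b \<in> A n. v n b * real (g b))"
proof -
  have fin: "finite (A n)"
    using assms(1) by (simp add: directive_seq_def)
  have "(\<Sum>a \<in> A (Suc n). v (Suc n) a * real (\<Sum>b\<leftarrow>sig n a. g b))
      = (\<Sum>a \<in> A (Suc n). v (Suc n) a * (\<Sum>b \<in> A n. real (count_list (sig n a) b) * real (g b)))"
  proof (rule sum.cong[OF refl])
    fix a assume "a \<in> A (Suc n)"
    then have "set (sig n a) \<subseteq> A n"
      using assms(1) by (simp add: directive_seq_def)
    then show "v (Suc n) a * real (\<Sum>b\<leftarrow>sig n a. g b)
        = v (Suc n) a * (\<Sum>b \<in> A n. real (count_list (sig n a) b) * real (g b))"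
      using sum_list_map_eq_sum_count2[of "sig n a" "A n" g] fin by simp
  qed
  also have "\<dots> = (\<Sum>b \<in> A n. real (g b) * (\<Sum>a \<in> A (Suc n). real (count_list (sig n a) b) * v (Suc n) a))"
    by (simp only: sum_distrib_left, subst sum.swap) (simp add: mult_ac)
  also have "\<dots> = (\<Sum>b \<in> A n. v n b * real (g b))"
    using assms(2) by (intro sum.cong) (auto simp: vector_tower_def)
  finally show ?thesis .
qed

lemma vector_tower_nonneg: "vector_tower A sig v \<Longrightarrow> a \<in> A n \<Longrightarrow> 0 \<le> v n a"
  unfolding vector_tower_def by blast

definition eval_seq :: "(nat \<Rightarrow> 'a set) \<Rightarrow> (nat \<Rightarrow> 'a \<Rightarrow> 'a list) \<Rightarrow> (nat \<Rightarrow> 'a \<Rightarrow> real)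
    \<Rightarrow> nat \<Rightarrow> 'a list \<Rightarrow> nat \<Rightarrow> real" where
  "eval_seq A sig v k w m = (\<Sum>a \<in> A (k + m). v (k + m) a * real (occ (sig_range sig k m [a]) w))"

lemma eval_tower_eq_lim: "eval_tower A sig v k w = lim (eval_seq A sig v k w)"
  by (simp add: eval_tower_def eval_seq_def[abs_def])

lemma eval_seq_le_Suc:
  assumes "directive_seq A sig" "vector_tower A sig v" "w \<noteq> []"
  shows "eval_seq A sig v k w m \<le> eval_seq A sig v k w (Suc m)"
proof -
  let ?F = "\<lambda>b. sig_range sig k m [b]"
  let ?n = "Suc (k + m)"
  have "eval_seq A sig v k w m = (\<Sum>a \<in> A ?n. v ?n a * real (\<Sum>b\<leftarrow>sig (k + m) a. occ (?F b) w))"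
    unfolding eval_seq_def by (rule vector_tower_sum_step[OF assms(1,2), symmetric])
  also have "\<dots> \<le> (\<Sum>a \<in> A ?n. v ?n a * real (occ (concat (map ?F (sig (k + m) a))) w))"
  proof (intro sum_mono mult_left_mono)
    fix a assume "a \<in> A ?n"
    then show "0 \<le> v ?n a"
      by (rule vector_tower_nonneg[OF assms(2)])
    show "real (\<Sum>b\<leftarrow>sig (k + m) a. occ (?F b) w) \<le> real (occ (concat (map ?F (sig (k + m) a))) w)"
      using sum_list_occ_le_occ_concat[OF assms(3), of "map ?F (sig (k + m) a)"] by (simp add: comp_def)
  qed
  also have "\<dots> = eval_seq A sig v k w (Suc m)"
    unfolding eval_seq_def by (simp only: add_Suc_right sig_range_Suc_letter)
  finally show ?thesis .
qed

lemma vector_tower_length_sum: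
  assumes "directive_seq A sig" "vector_tower A sig v"
  shows "(\<Sum>a \<in> A (k + m). v (k + m) a * real (length (sig_range sig k m [a]))) = (\<Sum>a \<in> A k. v k a)"
proof (induction m)
  case (Suc m)
  have "(\<Sum>a \<in> A (k + Suc m). v (k + Suc m) a * real (length (sig_range sig k (Suc m) [a])))
      = (\<Sum>a \<in> A (Suc (k + m)). v (Suc (k + m)) a *
           real (\<Sum>b\<leftarrow>sig (k + m) a. length (sig_range sig k m [b])))"
    by (simp only: add_Suc_right sig_range_Suc_letter length_concat map_map comp_def)
  also have "\<dots> = (\<Sum>a \<in> A (k + m). v (k + m) a * real (length (sig_range sig k m [a])))"
    by (rule vector_tower_sum_step[OF assms])
  finally show ?case
    using Suc by simp
qed simp

lemma eval_seq_le_mass: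
  assumes "directive_seq A sig" "vector_tower A sig v" "w \<noteq> []"
  shows "eval_seq A sig v k w m \<le> (\<Sum>a \<in> A k. v k a)"
proof -
  have "eval_seq A sig v k w m \<le> (\<Sum>a \<in> A (k + m). v (k + m) a * real (length (sig_range sig k m [a])))"
    unfolding eval_seq_def using occ_le_length[OF assms(3)] vector_tower_nonneg[OF assms(2)]
    by (intro sum_mono mult_left_mono) simp_all
  then show ?thesis
    using vector_tower_length_sum[OF assms(1,2)] by simp
qed

lemma eval_seq_LIMSEQ:
  assumes "directive_seq A sig" "vector_tower A sig v" "w \<noteq> []"
  shows "eval_seq A sig v k w \<longlonglongrightarrow> eval_tower A sig v k w"
proof -
  have "incseq (eval_seq A sig v k w)"
    by (rule incseq_SucI) (rule eval_seq_le_Suc[OF assms])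
  moreover have "\<forall>m. eval_seq A sig v k w m \<le> (\<Sum>a \<in> A k. v k a)"
    using eval_seq_le_mass[OF assms] by blast
  ultimately obtain L where "eval_seq A sig v k w \<longlonglongrightarrow> L"
    by (rule incseq_convergent)
  then show ?thesis
    unfolding eval_tower_eq_lim by (simp add: limI)
qed

declare upt_Suc [simp del]

abbreviation pi_block :: "('a \<Rightarrow> 'b list) \<Rightarrow> 'a \<Rightarrow> ('a \<times> nat) list" where
  "pi_block s a \<equiv> map (\<lambda>i. (a, i)) [1..<Suc (length (s a))]"

lemma pi_sig_Nil [simp]: "pi_sig s [] = []"
  by (simp add: pi_sig_def)

lemma pi_sig_Cons [simp]: "pi_sig s (a # u) = pi_block s a @ pi_sig s u"
  by (simp add: pi_sig_def)

lemma pi_sig_append [simp]: "pi_sig s (u @ u') = pi_sig s u @ pi_sig s u'"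
  by (simp add: pi_sig_def)

lemma set_pi_sig_subset: "u \<in> lists A \<Longrightarrow> set (pi_sig s u) \<subseteq> sub_alph A s"
  by (induction u) (auto simp: sub_alph_def)

lemma finite_sub_alph:
  assumes "finite A"
  shows "finite (sub_alph A s)"
proof -
  have "sub_alph A s = (\<Union>a \<in> A. (\<lambda>i. (a, i)) ` {1..length (s a)})"
    unfolding sub_alph_def by auto
  then show ?thesis
    using assms by simp
qed

lemma map_alpha_sig_pi_sig: "map (alpha_sig s) (pi_sig s u) = subst s u"
proof -
  have "map (alpha_sig s) (pi_block s a) = s a" for a
    by (rule nth_equalityI) (simp_all add: alpha_sig_def)
  then show ?thesis
    by (induction u) simp_all
qed

lemma snd_nth_pi_sig_le:
  assumes "\<forall>a \<in> set y. s a \<noteq> []" "t < length (pi_sig s y)"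
  shows "snd (pi_sig s y ! t) \<le> Suc t"
  using assms
proof (induction y arbitrary: t)
  case (Cons b y)
  show ?case
  proof (cases "t < length (s b)")
    case False
    then have "snd (pi_sig s y ! (t - length (s b))) \<le> Suc (t - length (s b))"
      using Cons by simp
    then show ?thesis
      using False by (simp add: nth_append)
  qed (simp add: nth_append)
qed simp

lemma nth_pi_sig_first_block:
  assumes "\<forall>a \<in> set y. s a \<noteq> []" "t < length (pi_sig s y)" "snd (pi_sig s y ! t) = Suc t"
  shows "pi_sig s y ! t = (hd y, Suc t)"
proof (cases y)
  case (Cons b y')
  show ?thesis
  proof (cases "t < length (s b)")
    case False
    have "t - length (s b) < length (pi_sig s y')"
      using assms(2) False Cons by simp
    then have "snd (pi_sig s y' ! (t - length (s b))) \<le> Suc (t - length (s b))"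
      using assms(1) Cons by (intro snd_nth_pi_sig_le) simp_all
    moreover have "0 < length (s b)"
      using assms(1) Cons by simp
    then have "t - length (s b) < t"
      using False by linarith
    ultimately show ?thesis
      using assms(3) False Cons by (simp add: nth_append)
  qed (use Cons in \<open>simp add: nth_append\<close>)
qed (use assms in simp)

lemma prefix_of_take_pi_sig_eq:
  assumes "\<forall>a \<in> set y. s a \<noteq> []" "\<forall>a \<in> set x. s a \<noteq> []" "x \<noteq> []"
    and "length (pi_sig s (butlast x)) < r" "r \<le> length (pi_sig s x)"
    and "take r (pi_sig s y) = take r (pi_sig s x)"
  shows "prefix x y"
  using assms
proof (induction x arbitrary: y r)
  case (Cons a x)
  have "0 < length (s a)" "0 < r"
    using Cons.prems by simp_all
  then obtain b y' where y: "y = b # y'"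
    using Cons.prems(6) by (cases y) simp_all
  have "0 < length (s b)"
    using Cons.prems(1) y by simp
  then have "b = a"
    using arg_cong[OF Cons.prems(6), of "\<lambda>l. l ! 0"] \<open>0 < length (s a)\<close> \<open>0 < r\<close> y
    by (simp add: nth_append)
  show ?case
  proof (cases "x = []")
    case False
    then have r: "length (s a) + length (pi_sig s (butlast x)) < r"
      using Cons.prems(4) by simp
    then have "take (r - length (s a)) (pi_sig s y') = take (r - length (s a)) (pi_sig s x)"
      using Cons.prems(6) y \<open>b = a\<close> by (simp add: take_append)
    then have "prefix x y'"
      using Cons.prems y r False by (intro Cons.IH) auto
    then show ?thesis
      using y \<open>b = a\<close> by simp
  qed (use y \<open>b = a\<close> in simp)
qed simp

text \<open>\<open>w\<close> occurs in \<open>\<pi>(h)\<close> at position \<open>off\<close>, starting in the block of the first letter of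
  \<open>h\<close> and ending in the block of its last; minimality forces this shape on \<open>hat A s w\<close>.\<close>

definition tight_cover :: "'a set \<Rightarrow> ('a \<Rightarrow> 'b list) \<Rightarrow> ('a \<times> nat) list \<Rightarrow> 'a list \<Rightarrow> nat \<Rightarrow> bool" where
  "tight_cover A s w h off \<longleftrightarrow> h \<in> lists A \<and> h \<noteq> [] \<and> off < length (s (hd h)) \<and>
     length (pi_sig s (butlast h)) < off + length w \<and> off \<in> occ_pos (pi_sig s h) w"

lemma nth0_of_take_drop: "take n (drop i xs) = w \<Longrightarrow> w \<noteq> [] \<Longrightarrow> w ! 0 = xs ! i"
  by auto

lemma tight_cover_nth0:
  assumes "tight_cover A s w h off" "w \<noteq> []"
  shows "w ! 0 = (hd h, Suc off)"
proof -
  obtain c h' where h: "h = c # h'"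
    using assms(1) by (cases h) (auto simp: tight_cover_def)
  have "w ! 0 = pi_sig s h ! off"
    using assms by (intro nth0_of_take_drop) (auto simp: tight_cover_def occ_pos_def)
  then show ?thesis
    using assms(1) h by (simp add: tight_cover_def nth_append)
qed

lemma tight_cover_occ_pos_iff_prefix:
  assumes ne: "\<forall>a \<in> A. s a \<noteq> []" and tight: "tight_cover A s w h off"
    and "w \<noteq> []" "y \<in> lists A"
  shows "off \<in> occ_pos (pi_sig s y) w \<longleftrightarrow> prefix h y"
proof
  assume "prefix h y"
  then show "off \<in> occ_pos (pi_sig s y) w"
    using tight by (auto simp: prefix_def tight_cover_def occ_pos_def)
next
  assume occurs: "off \<in> occ_pos (pi_sig s y) w"
  have h: "h \<in> lists A" "h \<noteq> []"
    using tight by (auto simp: tight_cover_def)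
  have ne_y: "\<forall>a \<in> set y. s a \<noteq> []"
    using ne assms(4) by auto
  have off_y: "off < length (pi_sig s y)"
    using occurs assms(3) by (cases w) (auto simp: occ_pos_def)
  have "w ! 0 = pi_sig s y ! off"
    using occurs assms(3) by (intro nth0_of_take_drop) (auto simp: occ_pos_def)
  then have "pi_sig s y ! off = (hd h, Suc off)"
    using tight_cover_nth0[OF tight assms(3)] by simp
  \<comment> \<open>a letter with index \<open>off + 1\<close> at position \<open>off\<close> must lie in the first block\<close>
  then have "hd y = hd h" "y \<noteq> []"
    using nth_pi_sig_first_block[OF ne_y off_y] off_y by auto
  moreover obtain c h' where "h = c # h'"
    using h by (cases h) simp_all
  ultimately obtain y' where "y = c # y'"
    by (cases y) simp_all
  then have "take off (pi_sig s y) = take off (pi_sig s h)"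
    using tight \<open>h = c # h'\<close> by (simp add: tight_cover_def take_append)
  then have "take (off + length w) (pi_sig s y) = take (off + length w) (pi_sig s h)"
    using occurs tight by (simp add: tight_cover_def occ_pos_def take_add)
  then show "prefix h y"
    using prefix_of_take_pi_sig_eq[of y s h "off + length w"] ne_y ne h tight
    by (auto simp: tight_cover_def occ_pos_def)
qed

lemma occ_pi_sig_eq_occ:
  assumes ne: "\<forall>a \<in> A. s a \<noteq> []" and tight: "tight_cover A s w h off" and "w \<noteq> []"
  shows "u \<in> lists A \<Longrightarrow> occ (pi_sig s u) w = occ u h"
proof (induction u)
  case Nil
  have "h \<noteq> []"
    using tight by (simp add: tight_cover_def)
  then show ?case
    using assms(3) by (simp add: occ_Nil)
next
  case (Cons a u)
  let ?X = "{i \<in> occ_pos (pi_block s a @ pi_sig s u) w. i < length (pi_block s a)}"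
  \<comment> \<open>the first letter \<open>(hd h, off + 1)\<close> of \<open>w\<close> fixes where in a block an occurrence starts\<close>
  have "?X \<subseteq> {off}"
  proof
    fix i assume i: "i \<in> ?X"
    then have "w ! 0 = (pi_block s a @ pi_sig s u) ! i"
      using assms(3) by (intro nth0_of_take_drop) (auto simp: occ_pos_def)
    then show "i \<in> {off}"
      using i tight_cover_nth0[OF tight assms(3)] by (simp add: nth_append)
  qed
  moreover have "off \<in> ?X \<longleftrightarrow> prefix h (a # u)"
  proof -
    have "prefix h (a # u) \<Longrightarrow> off < length (s a)"
      using tight by (cases h) (auto simp: tight_cover_def)
    then show ?thesis
      using tight_cover_occ_pos_iff_prefix[OF ne tight assms(3) Cons.prems] by auto
  qed
  ultimately have "?X = (if prefix h (a # u) then {off} else {})"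
    by auto
  moreover have "h \<noteq> []"
    using tight by (simp add: tight_cover_def)
  ultimately show ?case
    using occ_append[of "pi_block s a" "pi_sig s u" w] Cons by (simp add: occ_Cons)
qed

lemma shortest_cover_tight:
  assumes "w \<noteq> []" "h \<in> lists A" "is_factor w (pi_sig s h)"
    and shortest: "\<And>u. u \<in> lists A \<Longrightarrow> is_factor w (pi_sig s u) \<Longrightarrow> length h \<le> length u"
  obtains off where "tight_cover A s w h off"
proof -
  obtain p q where pq: "pi_sig s h = p @ w @ q"
    using assms(3) unfolding is_factor_def by blast
  have "h \<noteq> []"
    using pq assms(1) by auto
  obtain a h1 where a: "h = a # h1"
    using \<open>h \<noteq> []\<close> by (cases h) auto
  have first: "length p < length (s a)"
  proof (rule ccontr)
    assume "\<not> length p < length (s a)"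
    then have "pi_sig s h1 = drop (length (s a)) p @ w @ q"
      using arg_cong[OF pq, of "drop (length (s a))"] a by simp
    then have "is_factor w (pi_sig s h1)"
      unfolding is_factor_def by blast
    then have "length h \<le> length h1"
      using shortest assms(2) a by simp
    then show False
      using a by simp
  qed
  obtain h2 b where b: "h = h2 @ [b]"
    using \<open>h \<noteq> []\<close> by (cases h rule: rev_cases) auto
  have lengths: "length (pi_sig s h2) + length (s b) = length p + length w + length q"
    using arg_cong[OF pq, of length] b by simp
  have last: "length q < length (s b)"
  proof (rule ccontr)
    assume "\<not> length q < length (s b)"
    then have "length (pi_sig s h2) = length p + length w + (length q - length (s b))"
      using lengths by linarith
    then have "pi_sig s h2 = p @ w @ take (length q - length (s b)) q"
      using arg_cong[OF pq, of "take (length (pi_sig s h2))"] b by simp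
    then have "is_factor w (pi_sig s h2)"
      unfolding is_factor_def by blast
    then have "length h \<le> length h2"
      using shortest assms(2) b by simp
    then show False
      using b by simp
  qed
  have "length p < length (s (hd h))"
    using first a by simp
  moreover have "length (pi_sig s (butlast h)) < length p + length w"
    using b lengths last by simp
  ultimately have "tight_cover A s w h (length p)"
    unfolding tight_cover_def occ_pos_def using assms(2) \<open>h \<noteq> []\<close> pq by simp
  then show ?thesis
    by (rule that)
qed

lemma tight_cover_hat:
  assumes ne: "\<forall>a \<in> A. s a \<noteq> []" and "w \<noteq> []" and "\<exists>u \<in> lists A. is_factor w (pi_sig s u)"
  obtains off where "tight_cover A s w (hat A s w) off"
proof -
  let ?covers = "\<lambda>u. u \<in> lists A \<and> is_factor w (pi_sig s u)"
  obtain h where h: "?covers h" and shortest: "\<forall>u. ?covers u \<longrightarrow> length h \<le> length u"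
    using ex_has_least_nat[of ?covers _ length] assms(3) by blast
  then obtain off where tight: "tight_cover A s w h off"
    using shortest_cover_tight[OF assms(2)] by blast
  have "hat A s w = h"
    unfolding hat_def
  proof (rule the_equality)
    show "h \<in> lists A \<and> is_factor w (pi_sig s h) \<and>
        (\<forall>u \<in> lists A. is_factor w (pi_sig s u) \<longrightarrow> length h \<le> length u)"
      using h shortest by blast
  next
    fix x assume x: "x \<in> lists A \<and> is_factor w (pi_sig s x) \<and>
        (\<forall>u \<in> lists A. is_factor w (pi_sig s u) \<longrightarrow> length x \<le> length u)"
    then have "0 < occ x h"
      using occ_pi_sig_eq_occ[OF ne tight assms(2)] occ_gt_0_iff_is_factor by metis
    then have "is_factor h x"
      by (simp add: occ_gt_0_iff_is_factor)
    moreover have "length x \<le> length h"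
      using x h by blast
    ultimately show "x = h"
      unfolding is_factor_def by auto
  qed
  then show ?thesis
    using tight that by simp
qed

lemma occ_pi_sig_eq_hat_val:
  assumes ne: "\<forall>a \<in> A. s a \<noteq> []" and "w \<noteq> []" "u \<in> lists A"
  shows "real (occ (pi_sig s u) w) = hat_val A s (\<lambda>h. real (occ u h)) w"
proof (cases "\<exists>u' \<in> lists A. is_factor w (pi_sig s u')")
  case True
  then obtain off where "tight_cover A s w (hat A s w) off"
    using tight_cover_hat[OF ne assms(2)] by blast
  then show ?thesis
    using occ_pi_sig_eq_occ[OF ne _ assms(2,3)] True by (simp add: hat_val_def)
next
  case False
  then have "occ (pi_sig s u) w = 0"
    using assms(3) occ_gt_0_iff_is_factor by (metis neq0_conv)
  then show ?thesis
    using False by (simp add: hat_val_def)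
qed

lemma occ_subst_eq_measure_transfer:
  assumes "finite A" "\<forall>a \<in> A. s a \<noteq> []" "w' \<noteq> []" "u \<in> lists A"
  shows "real (occ (subst s u) w') = measure_transfer A s (\<lambda>h. real (occ u h)) w'"
proof -
  let ?W = "{w \<in> lists (sub_alph A s). map (alpha_sig s) w = w'}"
  have "occ (subst s u) w' = (\<Sum>w \<in> ?W. occ (pi_sig s u) w)"
    unfolding map_alpha_sig_pi_sig[symmetric]
    using set_pi_sig_subset[OF assms(4)] finite_sub_alph[OF assms(1)] by (rule occ_map_eq_sum)
  also have "real \<dots> = (\<Sum>w \<in> ?W. hat_val A s (\<lambda>h. real (occ u h)) w)"
    unfolding of_nat_sum using assms(3) occ_pi_sig_eq_hat_val[OF assms(2) _ assms(4)]
    by (intro sum.cong) auto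
  finally show ?thesis
    unfolding measure_transfer_def .
qed

lemma measure_transfer_sum:
  "measure_transfer A s (\<lambda>u. \<Sum>b \<in> B. c b * f b u) w' = (\<Sum>b \<in> B. c b * measure_transfer A s (f b) w')"
  unfolding measure_transfer_def hat_val_def sum_distrib_left
  by (subst sum.swap) (auto intro!: sum.cong)

lemma measure_transfer_LIMSEQ:
  assumes "\<forall>a \<in> A. s a \<noteq> []" "w' \<noteq> []"
    and "\<And>u. u \<in> lists A \<Longrightarrow> u \<noteq> [] \<Longrightarrow> (\<lambda>m. f m u) \<longlonglongrightarrow> g u"
  shows "(\<lambda>m. measure_transfer A s (f m) w') \<longlonglongrightarrow> measure_transfer A s g w'"
  unfolding measure_transfer_def
proof (rule tendsto_sum)
  fix w assume "w \<in> {w \<in> lists (sub_alph A s). map (alpha_sig s) w = w'}"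
  then have "w \<noteq> []"
    using assms(2) by auto
  show "(\<lambda>m. hat_val A s (f m) w) \<longlonglongrightarrow> hat_val A s g w"
  proof (cases "\<exists>u \<in> lists A. is_factor w (pi_sig s u)")
    case True
    then obtain off where "tight_cover A s w (hat A s w) off"
      using tight_cover_hat[OF assms(1) \<open>w \<noteq> []\<close>] by blast
    then show ?thesis
      using True assms(3) by (simp add: hat_val_def tight_cover_def)
  qed (simp add: hat_val_def)
qed

lemma eval_seq_Suc_eq_measure_transfer:
  assumes "directive_seq A sig" "w' \<noteq> []"
  shows "eval_seq A sig v k w' (Suc m)
           = measure_transfer (A (Suc k)) (sig k) (\<lambda>u. eval_seq A sig v (Suc k) u m) w'"
proof -
  have fin: "finite (A (Suc k))" and ne: "\<forall>a \<in> A (Suc k). sig k a \<noteq> []"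
    using assms(1) by (auto simp: directive_seq_def)
  have "eval_seq A sig v k w' (Suc m) = (\<Sum>a \<in> A (Suc k + m). v (Suc k + m) a *
          real (occ (subst (sig k) (sig_range sig (Suc k) m [a])) w'))"
    by (simp add: eval_seq_def)
  also have "\<dots> = (\<Sum>a \<in> A (Suc k + m). v (Suc k + m) a *
          measure_transfer (A (Suc k)) (sig k) (\<lambda>h. real (occ (sig_range sig (Suc k) m [a]) h)) w')"
  proof (rule sum.cong[OF refl])
    fix a assume "a \<in> A (Suc k + m)"
    then have "sig_range sig (Suc k) m [a] \<in> lists (A (Suc k))"
      using set_sig_range_subset[OF assms(1), of "[a]" "Suc k" m] by auto
    then show "v (Suc k + m) a * real (occ (subst (sig k) (sig_range sig (Suc k) m [a])) w')
        = v (Suc k + m) a *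
          measure_transfer (A (Suc k)) (sig k) (\<lambda>h. real (occ (sig_range sig (Suc k) m [a]) h)) w'"
      by (simp add: occ_subst_eq_measure_transfer[OF fin ne assms(2)])
  qed
  also have "\<dots> = measure_transfer (A (Suc k)) (sig k) (\<lambda>u. eval_seq A sig v (Suc k) u m) w'"
    unfolding eval_seq_def by (rule measure_transfer_sum[symmetric])
  finally show ?thesis .
qed

theorem lemma5p2:
  fixes A :: "nat \<Rightarrow> 'a set" and sig :: "nat \<Rightarrow> 'a \<Rightarrow> 'a list" and v :: "nat \<Rightarrow> 'a \<Rightarrow> real"
  assumes "directive_seq A sig"
    and "everywhere_growing A sig"
    and "vector_tower A sig v"
  shows "\<forall>k. \<forall>w' \<in> lists (A k). w' \<noteq> [] \<longrightarrow>
           measure_transfer (A (Suc k)) (sig k) (eval_tower A sig v (Suc k)) w'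
             = eval_tower A sig v k w'"
proof (intro allI ballI impI)
  fix k and w' :: "'a list"
  assume "w' \<noteq> []"
  have "(\<lambda>m. measure_transfer (A (Suc k)) (sig k) (\<lambda>u. eval_seq A sig v (Suc k) u m) w')
          \<longlonglongrightarrow> measure_transfer (A (Suc k)) (sig k) (eval_tower A sig v (Suc k)) w'"
    using assms(1) \<open>w' \<noteq> []\<close> eval_seq_LIMSEQ[OF assms(1,3)]
    by (intro measure_transfer_LIMSEQ) (auto simp: directive_seq_def)
  then have "(\<lambda>m. eval_seq A sig v k w' (Suc m))
               \<longlonglongrightarrow> measure_transfer (A (Suc k)) (sig k) (eval_tower A sig v (Suc k)) w'"
    by (simp only: eval_seq_Suc_eq_measure_transfer[OF assms(1) \<open>w' \<noteq> []\<close>])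
  then have "eval_seq A sig v k w'
               \<longlonglongrightarrow> measure_transfer (A (Suc k)) (sig k) (eval_tower A sig v (Suc k)) w'"
    by (rule LIMSEQ_imp_Suc)
  then show "measure_transfer (A (Suc k)) (sig k) (eval_tower A sig v (Suc k)) w'
               = eval_tower A sig v k w'"
    using eval_seq_LIMSEQ[OF assms(1,3) \<open>w' \<noteq> []\<close>] by (rule LIMSEQ_unique)
qed

end
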